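(* Let $u:A^{\mathrm{ground}}\to[0,1]$ with $u(a_\bot)=1$ and $w:A^{\mathrm{ground}}\to\mathbb{R}$. Let $S^{\mathrm{best}}$ be the item list returned by the procedure BestPerm (described in the context) on input $(u,w)$. Then $f(S^{\mathrm{best}},u,w)=\max_{A\in\mathcal{A}}f(A,u,w)$.
   Context: $A^{\mathrm{ground}}=\{a_1,\dots,a_N,a_\bot\}$ with regular items $a_1,\dots,a_N$ and a virtual item $a_\bot$; $1\le m\le N$. $\mathcal{A}$ is the set of sequences consisting of between $1$ and $m$ distinct regular items followed by $a_\bot$. For a sequence $A$ of distinct items, $f(A,u,w)=\sum_{i=1}^{|A|}\prod_{j=1}^{i-1}(1-u(A(j)))u(A(i))w(A(i))$. Procedure BestPerm$(u,w)$: let $J$ be the number of regular items $a$ with $w(a)>w(a_\bot)$ and relabel these items $a_1,\dots,a_J$ so that $w(a_1)\ge\dots\ge w(a_J)$. If $J=0$: output $(a',a_\bot)$ where $a'$ maximizes $u(a)w(a)+(1-u(a))w(a_\bot)$ over regular items $a$. If $1\le J\le m$: output $(a_1,\dots,a_J,a_\bot)$. If $J>m$: compute tables $S[i][k]$ (sequences) and $F[i][k]$ (values) by: $S[J][1]=(a_J)$, $F[J][1]=u(a_J)w(a_J)+(1-u(a_J))w(a_\bot)$; for all $i\in[J]$, $S[i][0]=\emptyset$, $F[i][0]=w(a_\bot)$; for all $i\in[J]$ and $J-i+1<k\le m$, $F[i][k]=-\infty$; for $i=J-1,\dots,1$ and $k=1,\dots,\min\{m,J-i+1\}$: if $F[i+1][k]\ge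 u(a_i)w(a_i)+(1-u(a_i))F[i+1][k-1]$ then $S[i][k]=S[i+1][k]$, $F[i][k]=F[i+1][k]$, otherwise $S[i][k]=(a_i,S[i+1][k-1])$ (i.e. $a_i$ prepended), $F[i][k]=u(a_i)w(a_i)+(1-u(a_i))F[i+1][k-1]$. Output $S[1][m]$ followed by $a_\bot$. *)

theory Defs
  imports Main "HOL-Library.Extended_Real"
begin

definition fval :: "'a list \<Rightarrow> ('a \<Rightarrow> real) \<Rightarrow> ('a \<Rightarrow> real) \<Rightarrow> real" where
  "fval A u w = (\<Sum>i<length A. (\<Prod>j<i. 1 - u (A ! j)) * u (A ! i) * w (A ! i))"

definition feasible :: "'a set \<Rightarrow> 'a \<Rightarrow> nat \<Rightarrow> 'a list set" where
  "feasible R abot m = {B @ [abot] | B. distinct B \<and> set B \<subseteq> R \<and> 1 \<le> length B \<and> length B \<le> m}"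

text \<open>For the suffix xs = (a_i, ..., a_J) of the relabelled list
  and k, dp abot u w xs k = (F[i][k], S[i][k]).  Entries with F = -infinity
  (k > J-i+1) carry a dummy sequence [] (never output).\<close>
fun dp :: "'a \<Rightarrow> ('a \<Rightarrow> real) \<Rightarrow> ('a \<Rightarrow> real) \<Rightarrow> 'a list \<Rightarrow> nat \<Rightarrow> ereal \<times> 'a list" where
  "dp abot u w xs 0 = (ereal (w abot), [])"
| "dp abot u w [] (Suc k) = (-\<infinity>, [])"
| "dp abot u w (a # xs) (Suc k) =
     (if length xs + 1 < Suc k then (-\<infinity>, [])
      else if xs = [] then (ereal (u a * w a + (1 - u a) * w abot), [a])
      else
        (let (F1, S1) = dp abot u w xs (Suc k);
             (F0, S0) = dp abot u w xs k;
             cand = ereal (u a * w a) + ereal (1 - u a) * F0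
         in if F1 \<ge> cand then (F1, S1) else (cand, a # S0)))"

text \<open>BestPerm as a relation: S is a possible output of BestPerm(u,w)
  (ties in the sorting and in the argmax may be broken arbitrarily).\<close>
definition best_perm ::
  "'a set \<Rightarrow> 'a \<Rightarrow> nat \<Rightarrow> ('a \<Rightarrow> real) \<Rightarrow> ('a \<Rightarrow> real) \<Rightarrow> 'a list \<Rightarrow> bool" where
  "best_perm R abot m u w S \<longleftrightarrow>
     (let J = card {a \<in> R. w a > w abot} in
      if J = 0 then
        (\<exists>a'. a' \<in> R \<and>
           (\<forall>a\<in>R. u a * w a + (1 - u a) * w abot \<le> u a' * w a' + (1 - u a') * w abot) \<and>
           S = [a', abot])
      else
        (\<exists>L. distinct L \<and> set L = {a \<in> R. w a > w abot} \<and>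
             sorted_wrt (\<lambda>x y. w x \<ge> w y) L \<and>
             S = (if J \<le> m then L else snd (dp abot u w L m)) @ [abot]))"

end

theory Submission
  imports Defs "HOL-Library.Sublist"
begin

(* With u(abot) = 1, f(B @ [abot]) is the value fval_stop of B with terminal payoff w(abot): a
   convex combination of w(abot) and the weights of B.  Hence items with w <= w(abot) can be
   dropped, and adjacent swaps towards non-increasing w never hurt, so every feasible B is
   dominated by a subsequence of the sorted list L of items with w > w(abot); adding further items
   of L in sorted position does not hurt either.  So L itself is optimal if it has at most m items,
   and otherwise the optimum is the best length-m subsequence of L, which is exactly what the DP
   computes.  If no item beats abot, every B is dominated by its first item alone. *)

lemma subseq_Cons_cases [consumes 1, case_names tail head]:
  assumes "subseq C (x # xs)"
  obtains "subseq C xs" | C' where "C = x # C'" "subseq C' xs"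
  using assms by (cases C) (auto split: if_splits)

lemma subseq_extend_length:
  assumes "subseq C L" "length C \<le> k" "k \<le> length L"
  shows "\<exists>D. subseq C D \<and> subseq D L \<and> length D = k"
  using assms
proof (induction L arbitrary: C k rule: list.induct)
  case (Cons x L)
  from Cons.prems(1) show ?case
  proof (cases rule: subseq_Cons_cases)
    case tail
    show ?thesis
    proof (cases "k \<le> length L")
      case True
      then show ?thesis using Cons.IH[OF tail Cons.prems(2)] by auto
    next
      case False
      then show ?thesis using Cons.prems by (intro exI[of _ "x # L"]) auto
    qed
  next
    case (head C')
    have "length C' \<le> k - 1" "k - 1 \<le> length L"
      using head Cons.prems by auto
    then obtain D' where "subseq C' D'" "subseq D' L" "length D' = k - 1"
      using Cons.IH head by blast
    then show ?thesis using head Cons.prems by (intro exI[of _ "x # D'"]) auto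
  qed
qed simp

lemma sorted_wrt_subseq: "subseq xs ys \<Longrightarrow> sorted_wrt P ys \<Longrightarrow> sorted_wrt P xs"
  by (induction rule: list_emb.induct) (auto elim: list_emb_set)

fun fval_stop :: "('a \<Rightarrow> real) \<Rightarrow> ('a \<Rightarrow> real) \<Rightarrow> real \<Rightarrow> 'a list \<Rightarrow> real" where
  "fval_stop u w c [] = c"
| "fval_stop u w c (a # B) = u a * w a + (1 - u a) * fval_stop u w c B"

lemma fval_Nil [simp]: "fval [] u w = 0"
  by (simp add: fval_def)

lemma fval_Cons [simp]: "fval (a # A) u w = u a * w a + (1 - u a) * fval A u w"
proof -
  have "fval (a # A) u w =
      (\<Sum>i<Suc (length A). (\<Prod>j<i. 1 - u ((a # A) ! j)) * u ((a # A) ! i) * w ((a # A) ! i))"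
    by (simp add: fval_def)
  also have "\<dots> = u a * w a +
      (\<Sum>i<length A. (\<Prod>j<Suc i. 1 - u ((a # A) ! j)) * u (A ! i) * w (A ! i))"
    by (subst sum.lessThan_Suc_shift) simp
  also have "\<dots> = u a * w a + (1 - u a) * fval A u w"
    by (subst prod.lessThan_Suc_shift) (simp add: fval_def sum_distrib_left mult.assoc)
  finally show ?thesis .
qed

lemma fval_append_stop: "u x = 1 \<Longrightarrow> fval (B @ [x]) u w = fval_stop u w (w x) B"
  by (induction B) simp_all

lemma fval_stop_Cons_mono:
  "u a \<le> 1 \<Longrightarrow> fval_stop u w c B \<le> fval_stop u w c B' \<Longrightarrow>
   fval_stop u w c (a # B) \<le> fval_stop u w c (a # B')"
  by (simp add: mult_left_mono)

lemma fval_stop_le_bound: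
  assumes "\<forall>a\<in>set B. u a \<in> {0..1} \<and> w a \<le> M" and "c \<le> M"
  shows "fval_stop u w c B \<le> M"
  using assms
proof (induction B)
  case (Cons a B)
  then have "u a * w a + (1 - u a) * fval_stop u w c B \<le> u a * M + (1 - u a) * M"
    by (intro add_mono mult_left_mono) auto
  then show ?case by (simp add: algebra_simps)
qed simp

lemma fval_stop_ge_bound:
  assumes "\<forall>a\<in>set B. u a \<in> {0..1} \<and> M \<le> w a" and "M \<le> c"
  shows "M \<le> fval_stop u w c B"
  using assms
proof (induction B)
  case (Cons a B)
  then have "u a * M + (1 - u a) * M \<le> u a * w a + (1 - u a) * fval_stop u w c B"
    by (intro add_mono mult_left_mono) auto
  then show ?case by (simp add: algebra_simps)
qed simp

lemma fval_stop_swap: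
  assumes "0 \<le> u a" "0 \<le> u b" "w a \<le> w b"
  shows "fval_stop u w c (a # b # B) \<le> fval_stop u w c (b # a # B)"
proof -
  have "fval_stop u w c (a # b # B) - fval_stop u w c (b # a # B) = u a * u b * (w a - w b)"
    by (simp add: algebra_simps)
  also have "\<dots> \<le> 0"
    using assms by (simp add: mult_nonneg_nonpos)
  finally show ?thesis by simp
qed

lemma fval_stop_le_filter_above:
  assumes "\<forall>a\<in>set B. u a \<in> {0..1}"
  shows "fval_stop u w c B \<le> fval_stop u w c (filter (\<lambda>a. c < w a) B)"
  using assms
proof (induction B)
  case (Cons a B)
  let ?G = "filter (\<lambda>a. c < w a) B"
  show ?case
  proof (cases "c < w a")
    case True
    then show ?thesis using Cons by (simp add: mult_left_mono)
  next
    case False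
    have "w a \<le> fval_stop u w c ?G"
      using False Cons.prems by (intro fval_stop_ge_bound) auto
    then have "u a * w a + (1 - u a) * fval_stop u w c B
        \<le> u a * fval_stop u w c ?G + (1 - u a) * fval_stop u w c ?G"
      using Cons by (intro add_mono mult_left_mono) auto
    then show ?thesis using False by (simp add: algebra_simps)
  qed
qed simp

text \<open>Moving an item from the front to its place in a list sorted by decreasing \<open>w\<close>
  is a sequence of adjacent swaps, none of which decreases the value.\<close>
lemma fval_stop_insert_sorted:
  assumes "distinct L" "sorted_wrt (\<lambda>x y. w y \<le> w x) L" "\<forall>x\<in>set L. u x \<in> {0..1}"
    and "a \<in> set L" "\<not> P a"
  shows "fval_stop u w c (a # filter P L) \<le> fval_stop u w c (filter (\<lambda>x. x = a \<or> P x) L)"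
  using assms
proof (induction L)
  case (Cons y L)
  show ?case
  proof (cases "y = a")
    case True
    then have "filter (\<lambda>x. x = a \<or> P x) L = filter P L"
      using Cons.prems(1) by (auto intro: filter_cong)
    then show ?thesis using True Cons.prems(5) by simp
  next
    case False
    then have IH: "fval_stop u w c (a # filter P L) \<le> fval_stop u w c (filter (\<lambda>x. x = a \<or> P x) L)"
      using Cons by auto
    show ?thesis
    proof (cases "P y")
      case True
      have "fval_stop u w c (a # y # filter P L) \<le> fval_stop u w c (y # a # filter P L)"
        using Cons.prems False by (intro fval_stop_swap) auto
      also have "\<dots> \<le> fval_stop u w c (y # filter (\<lambda>x. x = a \<or> P x) L)"
        using IH Cons.prems(3) by (intro fval_stop_Cons_mono) auto
      finally show ?thesis using True False by simp
    qed (use IH False in simp)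
  qed
qed simp

lemma fval_stop_le_sorted_filter:
  assumes "distinct B" "set B \<subseteq> set L"
    and "distinct L" "sorted_wrt (\<lambda>x y. w y \<le> w x) L" "\<forall>x\<in>set L. u x \<in> {0..1}"
  shows "fval_stop u w c B \<le> fval_stop u w c (filter (\<lambda>x. x \<in> set B) L)"
  using assms(1,2)
proof (induction B)
  case (Cons a B)
  have "fval_stop u w c (a # B) \<le> fval_stop u w c (a # filter (\<lambda>x. x \<in> set B) L)"
    using Cons assms(5) by (intro fval_stop_Cons_mono) auto
  also have "\<dots> \<le> fval_stop u w c (filter (\<lambda>x. x = a \<or> x \<in> set B) L)"
    using Cons.prems assms(3-5) by (intro fval_stop_insert_sorted) auto
  finally show ?case by simp
qed simp

lemma fval_stop_subseq_mono:
  assumes "subseq C D" "sorted_wrt (\<lambda>x y. w y \<le> w x) D" "\<forall>x\<in>set D. u x \<in> {0..1} \<and> c \<le> w x"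
  shows "fval_stop u w c C \<le> fval_stop u w c D"
  using assms
proof (induction rule: list_emb.induct)
  case (list_emb_Nil ys)
  then show ?case by (intro fval_stop_ge_bound) auto
next
  case (list_emb_Cons xs ys y)
  have uy: "0 \<le> u y" "u y \<le> 1"
    using list_emb_Cons.prems(2) by auto
  have "fval_stop u w c xs \<le> fval_stop u w c ys"
    using list_emb_Cons.IH list_emb_Cons.prems by simp
  also have "\<dots> = u y * fval_stop u w c ys + (1 - u y) * fval_stop u w c ys"
    by (simp add: algebra_simps)
  also have "\<dots> \<le> u y * w y + (1 - u y) * fval_stop u w c ys"
    using list_emb_Cons.prems uy by (intro add_right_mono mult_left_mono fval_stop_le_bound) auto
  finally show ?case by simp
next
  case (list_emb_Cons2 x y xs ys)
  have "fval_stop u w c xs \<le> fval_stop u w c ys"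
    using list_emb_Cons2.IH list_emb_Cons2.prems by simp
  then show ?case
    using list_emb_Cons2.hyps(1) list_emb_Cons2.prems(2) by (simp add: mult_left_mono)
qed

lemma fval_stop_le_subseq_of_sorted:
  assumes L: "distinct L" "sorted_wrt (\<lambda>x y. w y \<le> w x) L" "\<forall>x\<in>set L. u x \<in> {0..1} \<and> c < w x"
    and B: "distinct B" "\<forall>a\<in>set B. u a \<in> {0..1}" "{a \<in> set B. c < w a} \<subseteq> set L"
    and k: "min (length B) (length L) \<le> k" "k \<le> length L"
  shows "\<exists>D. subseq D L \<and> length D = k \<and> fval_stop u w c B \<le> fval_stop u w c D"
proof -
  define G where "G = filter (\<lambda>a. c < w a) B"
  define C where "C = filter (\<lambda>x. x \<in> set G) L"
  have G: "distinct G" "set G \<subseteq> set L"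
    using B by (auto simp: G_def)
  have "set C = set G"
    using G(2) by (auto simp: C_def)
  then have "length C = length G"
    using G(1) L(1) by (metis C_def distinct_card distinct_filter)
  also have "length G \<le> k"
  proof -
    have "length G = card (set G)" "length L = card (set L)"
      using G(1) L(1) by (simp_all add: distinct_card)
    then have "length G \<le> length L"
      using G(2) by (simp add: card_mono)
    then show ?thesis
      using k(1) length_filter_le[of "\<lambda>a. c < w a" B] unfolding G_def by linarith
  qed
  finally obtain D where D: "subseq C D" "subseq D L" "length D = k"
    using subseq_extend_length[of C L k] k(2) by (auto simp: C_def)
  have "fval_stop u w c B \<le> fval_stop u w c G"
    unfolding G_def using B(2) by (rule fval_stop_le_filter_above)
  also have "\<dots> \<le> fval_stop u w c C"
    unfolding C_def using G L by (intro fval_stop_le_sorted_filter) auto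
  also have "\<dots> \<le> fval_stop u w c D"
  proof (rule fval_stop_subseq_mono)
    show "sorted_wrt (\<lambda>x y. w y \<le> w x) D"
      using D(2) L(2) by (rule sorted_wrt_subseq)
    have "set D \<subseteq> set L"
      using D(2) by (auto elim: list_emb_set)
    then show "\<forall>x\<in>set D. u x \<in> {0..1} \<and> c \<le> w x"
      using L(3) by force
  qed (rule D(1))
  finally show ?thesis
    using D by blast
qed

definition best_subseq ::
  "('a \<Rightarrow> real) \<Rightarrow> ('a \<Rightarrow> real) \<Rightarrow> real \<Rightarrow> 'a list \<Rightarrow> nat \<Rightarrow> 'a list \<Rightarrow> bool" where
  "best_subseq u w c xs k S \<longleftrightarrow> subseq S xs \<and> length S = k \<and>
     (\<forall>C. subseq C xs \<and> length C = k \<longrightarrow> fval_stop u w c C \<le> fval_stop u w c S)"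

lemma best_subseq_length: "best_subseq u w c xs (length xs) xs"
  by (auto simp: best_subseq_def dest: subseq_same_length)

lemma best_subseq_0: "best_subseq u w c xs 0 []"
  by (simp add: best_subseq_def)

lemma best_subseq_Cons:
  assumes "u a \<le> 1" "best_subseq u w c xs k S0" "best_subseq u w c xs (Suc k) S1"
  shows "best_subseq u w c (a # xs) (Suc k)
    (if fval_stop u w c (a # S0) \<le> fval_stop u w c S1 then S1 else a # S0)"
proof -
  have "fval_stop u w c C \<le> max (fval_stop u w c S1) (fval_stop u w c (a # S0))"
    if "subseq C (a # xs)" "length C = Suc k" for C
    using that(1)
  proof (cases rule: subseq_Cons_cases)
    case tail
    then show ?thesis
      using that(2) assms(3) by (auto simp: best_subseq_def)
  next
    case (head C')
    then have "fval_stop u w c C' \<le> fval_stop u w c S0"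
      using that(2) assms(2) by (auto simp: best_subseq_def)
    with assms(1) have "fval_stop u w c (a # C') \<le> fval_stop u w c (a # S0)"
      by (rule fval_stop_Cons_mono)
    then show ?thesis
      using head(1) by (simp add: le_max_iff_disj del: fval_stop.simps)
  qed
  then show ?thesis
    using assms(2,3) by (auto simp: best_subseq_def)
qed

lemma dp_Suc_short: "length xs \<le> k \<Longrightarrow> dp abot u w xs (Suc k) = (-\<infinity>, [])"
  by (cases xs) auto

lemma dp_length: "dp abot u w xs (length xs) = (ereal (fval_stop u w (w abot) xs), xs)"
proof (induction xs)
  case (Cons a xs)
  then show ?case
    by (cases "xs = []") (auto simp: Let_def dp_Suc_short)
qed simp

lemma dp_best_subseq:
  assumes "k \<le> length xs" "\<forall>a\<in>set xs. u a \<le> 1"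
  shows "\<exists>S. dp abot u w xs k = (ereal (fval_stop u w (w abot) S), S) \<and>
    best_subseq u w (w abot) xs k S"
  using assms
proof (induction xs arbitrary: k)
  case Nil
  then show ?case using best_subseq_0 by auto
next
  case (Cons a xs)
  show ?case
  proof (cases "k = length (a # xs)")
    case True
    show ?thesis
      unfolding True by (intro exI[of _ "a # xs"] conjI dp_length best_subseq_length)
  next
    case False
    then have "k \<le> length xs"
      using Cons.prems(1) by simp
    show ?thesis
    proof (cases k)
      case 0
      then show ?thesis using best_subseq_0 by auto
    next
      case (Suc k')
      obtain S0 S1 where
        S0: "dp abot u w xs k' = (ereal (fval_stop u w (w abot) S0), S0)"
            "best_subseq u w (w abot) xs k' S0" and
        S1: "dp abot u w xs (Suc k') = (ereal (fval_stop u w (w abot) S1), S1)"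
            "best_subseq u w (w abot) xs (Suc k') S1"
        using Cons.IH[of k'] Cons.IH[of "Suc k'"] Suc \<open>k \<le> length xs\<close> Cons.prems(2) by auto
      have "xs \<noteq> []"
        using Suc \<open>k \<le> length xs\<close> by auto
      then have "dp abot u w (a # xs) k =
        (if fval_stop u w (w abot) (a # S0) \<le> fval_stop u w (w abot) S1
         then (ereal (fval_stop u w (w abot) S1), S1)
         else (ereal (fval_stop u w (w abot) (a # S0)), a # S0))"
        using Suc \<open>k \<le> length xs\<close> S0(1) S1(1) by (simp add: Let_def)
      then show ?thesis
        using best_subseq_Cons[OF _ S0(2) S1(2), of a] Suc Cons.prems(2) by auto
    qed
  qed
qed

lemma fval_stop_le_single:
  assumes "B \<noteq> []" "\<forall>a\<in>set B. u a \<in> {0..1} \<and> w a \<le> c"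
    and "\<forall>a\<in>set B. fval_stop u w c [a] \<le> fval_stop u w c [a']"
  shows "fval_stop u w c B \<le> fval_stop u w c [a']"
proof -
  obtain b B' where B: "B = b # B'"
    using assms(1) by (cases B) auto
  have "fval_stop u w c B' \<le> c"
    using assms(2) B by (intro fval_stop_le_bound) auto
  then have "fval_stop u w c B \<le> fval_stop u w c [b]"
    using assms(2) B by (simp add: mult_left_mono)
  also have "\<dots> \<le> fval_stop u w c [a']"
    using assms(3) B by simp
  finally show ?thesis .
qed

lemma sorted_above_optimal:
  assumes "distinct L" "sorted_wrt (\<lambda>x y. w y \<le> w x) L" "set L = {a \<in> R. c < w a}"
    and "\<forall>a\<in>R. u a \<in> {0..1}" "distinct B" "set B \<subseteq> R"
  shows "fval_stop u w c B \<le> fval_stop u w c L"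
proof -
  obtain D where "subseq D L" "length D = length L" "fval_stop u w c B \<le> fval_stop u w c D"
    using fval_stop_le_subseq_of_sorted[of L w u c B "length L"] assms by auto
  then show ?thesis
    using subseq_same_length by blast
qed

lemma dp_optimal:
  assumes "distinct L" "sorted_wrt (\<lambda>x y. w y \<le> w x) L" "set L = {a \<in> R. w abot < w a}"
    and "\<forall>a\<in>R. u a \<in> {0..1}" "m \<le> length L"
  obtains S where "dp abot u w L m = (ereal (fval_stop u w (w abot) S), S)" "subseq S L" "length S = m"
    "\<And>B. distinct B \<Longrightarrow> set B \<subseteq> R \<Longrightarrow> length B \<le> m \<Longrightarrow>
       fval_stop u w (w abot) B \<le> fval_stop u w (w abot) S"
proof -
  obtain S where S: "dp abot u w L m = (ereal (fval_stop u w (w abot) S), S)"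
    "best_subseq u w (w abot) L m S"
    using dp_best_subseq[of m L u abot w] assms by auto
  have "fval_stop u w (w abot) B \<le> fval_stop u w (w abot) S"
    if B: "distinct B" "set B \<subseteq> R" "length B \<le> m" for B
  proof -
    obtain D where "subseq D L" "length D = m" "fval_stop u w (w abot) B \<le> fval_stop u w (w abot) D"
      using fval_stop_le_subseq_of_sorted[of L w u "w abot" B m] assms B by auto
    then show ?thesis
      using S(2) unfolding best_subseq_def by force
  qed
  then show ?thesis
    using S that unfolding best_subseq_def by blast
qed

lemma sorted_or_dp_optimal:
  assumes "distinct L" "sorted_wrt (\<lambda>x y. w y \<le> w x) L" "set L = {a \<in> R. w abot < w a}"
    and "\<forall>a\<in>R. u a \<in> {0..1}" "L \<noteq> []" "1 \<le> m"
  defines "B0 \<equiv> if length L \<le> m then L else snd (dp abot u w L m)"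
  shows "distinct B0 \<and> set B0 \<subseteq> R \<and> 1 \<le> length B0 \<and> length B0 \<le> m \<and>
    (\<forall>B. distinct B \<and> set B \<subseteq> R \<and> length B \<le> m \<longrightarrow>
       fval_stop u w (w abot) B \<le> fval_stop u w (w abot) B0)"
proof (cases "length L \<le> m")
  case True
  have "set L \<subseteq> R" "1 \<le> length L"
    using assms(3,5) by (auto simp: Suc_le_eq)
  then show ?thesis
    using True assms(1) sorted_above_optimal[OF assms(1-4)] by (simp add: B0_def)
next
  case False
  then have "m \<le> length L"
    by simp
  obtain S where S: "dp abot u w L m = (ereal (fval_stop u w (w abot) S), S)"
    "subseq S L" "length S = m"
    "\<And>B. distinct B \<Longrightarrow> set B \<subseteq> R \<Longrightarrow> length B \<le> m \<Longrightarrow>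
       fval_stop u w (w abot) B \<le> fval_stop u w (w abot) S"
    using dp_optimal[OF assms(1-4) \<open>m \<le> length L\<close>] by blast
  have "distinct S"
    using S(2) assms(1) by (metis subseq_conv_nths distinct_nthsI)
  moreover have "set S \<subseteq> R"
    using S(2) assms(3) by (auto elim: list_emb_set)
  ultimately show ?thesis
    using S False assms(6) by (simp add: B0_def)
qed

lemma best_perm_optimal:
  assumes "finite R" "1 \<le> m" "\<forall>a\<in>R. u a \<in> {0..1}" "best_perm R abot m u w S"
  shows "\<exists>B0. S = B0 @ [abot] \<and> distinct B0 \<and> set B0 \<subseteq> R \<and> 1 \<le> length B0 \<and> length B0 \<le> m \<and>
    (\<forall>B. distinct B \<and> set B \<subseteq> R \<and> B \<noteq> [] \<and> length B \<le> m \<longrightarrow>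
       fval_stop u w (w abot) B \<le> fval_stop u w (w abot) B0)"
proof (cases "card {a \<in> R. w abot < w a} = 0")
  case True
  then have below: "\<forall>a\<in>R. w a \<le> w abot"
    using assms(1) by (simp add: not_less)
  obtain a' where a': "a' \<in> R" "S = [a', abot]"
    "\<forall>a\<in>R. u a * w a + (1 - u a) * w abot \<le> u a' * w a' + (1 - u a') * w abot"
    using assms(4) True unfolding best_perm_def Let_def by auto
  have "fval_stop u w (w abot) B \<le> fval_stop u w (w abot) [a']"
    if "set B \<subseteq> R" "B \<noteq> []" for B
    using that a'(3) below assms(3) by (intro fval_stop_le_single) auto
  then show ?thesis
    using a' assms(2) by (intro exI[of _ "[a']"]) auto
next
  case False
  then obtain L where L: "distinct L" "set L = {a \<in> R. w abot < w a}"
    "sorted_wrt (\<lambda>x y. w y \<le> w x) L"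
    "S = (if card {a \<in> R. w abot < w a} \<le> m then L else snd (dp abot u w L m)) @ [abot]"
    using assms(4) unfolding best_perm_def Let_def by auto
  moreover from L(1,2) have "card {a \<in> R. w abot < w a} = length L"
    by (metis distinct_card)
  ultimately show ?thesis
    using sorted_or_dp_optimal[OF L(1,3,2) assms(3) _ assms(2)] False by auto
qed

lemma finite_feasible: "finite R \<Longrightarrow> finite (feasible R abot m)"
proof -
  assume "finite R"
  have "feasible R abot m \<subseteq> (\<lambda>B. B @ [abot]) ` {B. set B \<subseteq> R \<and> length B \<le> m}"
    unfolding feasible_def by blast
  then show ?thesis
    using finite_lists_length_le[OF \<open>finite R\<close>] finite_subset by blast
qed

theorem lemma2:
  fixes R :: "'a set" and abot :: 'a and m :: nat
    and u w :: "'a \<Rightarrow> real" and S :: "'a list"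
  assumes "finite R" and "abot \<notin> R"
    and "1 \<le> m" and "m \<le> card R"
    and "\<And>a. a \<in> insert abot R \<Longrightarrow> 0 \<le> u a \<and> u a \<le> 1"
    and "u abot = 1"
    and "best_perm R abot m u w S"
  shows "fval S u w = Max ((\<lambda>A. fval A u w) ` feasible R abot m)"
proof -
  have "\<forall>a\<in>R. u a \<in> {0..1}"
    using assms(5) by auto
  then obtain B0 where B0: "S = B0 @ [abot]" "distinct B0" "set B0 \<subseteq> R" "1 \<le> length B0"
    "length B0 \<le> m" "\<forall>B. distinct B \<and> set B \<subseteq> R \<and> B \<noteq> [] \<and> length B \<le> m \<longrightarrow>
       fval_stop u w (w abot) B \<le> fval_stop u w (w abot) B0"
    using best_perm_optimal[OF assms(1,3) _ assms(7)] by blast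
  show ?thesis
  proof (rule Max_eqI[symmetric])
    show "finite ((\<lambda>A. fval A u w) ` feasible R abot m)"
      using finite_feasible[OF assms(1)] by blast
    show "fval S u w \<in> (\<lambda>A. fval A u w) ` feasible R abot m"
      using B0 unfolding feasible_def by blast
  next
    fix y
    assume "y \<in> (\<lambda>A. fval A u w) ` feasible R abot m"
    then obtain B where "y = fval (B @ [abot]) u w" "distinct B" "set B \<subseteq> R" "1 \<le> length B"
      "length B \<le> m"
      unfolding feasible_def by blast
    then show "y \<le> fval S u w"
      using B0 fval_append_stop[of u abot] assms(6) by auto
  qed
qed

end
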